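(* Let $q$ be a self-join-free Boolean conjunctive query, let $q_0\subseteq q$, and let $\mathbf{db}$ be a database. If $\mathbf{o}$ is a garbage set for $q_0$ in $\mathbf{db}$ and $\mathbf{p}$ is a garbage set for $q_0$ in $\mathbf{db}\setminus\mathbf{o}$, then $\mathbf{o}\cup\mathbf{p}$ is a garbage set for $q_0$ in $\mathbf{db}$.
   Context: Every relation name has a signature $[n,k]$ ($1\le k\le n$; primary-key positions $1,\dots,k$) and a mode in $\{\mathsf{c},\mathsf{i}\}$. Facts are variable-free atoms; facts are key-equal if same relation name and same primary-key values. A database is a finite set of facts with no two distinct key-equal facts of mode $\mathsf{c}$, all of whose relation names occur in $q$. The block of a fact $A$ in $\mathbf{db}$ is the set of facts of $\mathbf{db}$ key-equal to $A$. A repair of a set of facts is a maximal subset without two distinct key-equal facts. A self-join-free Boolean conjunctive query is a finite set of atoms with distinct relation names; for a fact $A$, $\mathrm{atom}(A)$ is the atom of $q$ with the same relation name. A subset $\mathbf{o}\subseteq\mathbf{db}$ is a garbage set for $q_0$ in $\mathbf{db}$ if (1) for every $A\in\mathbf{o}$, $\mathrm{atom}(A)\in q_0$ and the block of $A$ in $\mathbf{db}$ is included in $\mathbf{o}$; and (2) there is a repair $\mathbf{r}$ of $\mathbf{o}$ such that for every valuation $\theta$ of the variables of $q$, if $\theta(q)\subseteq(\mathbf{db}\setminus\mathbf{o})\cup\mathbf{r}$ then $\theta(q_0)\cap\mathbf{r}=\emptyset$. *)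

theory Defs
  imports Main
begin

(* Modes of relation names: consistent (c) or inconsistent (i). *)
datatype mode = ModeC | ModeI

datatype ('v, 'c) trm = Var 'v | Cst 'c

type_synonym ('r, 'v, 'c) atom = "'r \<times> ('v, 'c) trm list"
type_synonym ('r, 'c) fact = "'r \<times> 'c list"

(* A schema assigns every relation name its signature [n,k] and its mode: sig R = (n, k, mode). *)
type_synonym 'r schema = "'r \<Rightarrow> nat \<times> nat \<times> mode"

definition arity :: "'r schema \<Rightarrow> 'r \<Rightarrow> nat" where
  "arity sig R = fst (sig R)"

definition keylen :: "'r schema \<Rightarrow> 'r \<Rightarrow> nat" where
  "keylen sig R = fst (snd (sig R))"

definition rmode :: "'r schema \<Rightarrow> 'r \<Rightarrow> mode" where
  "rmode sig R = snd (snd (sig R))"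

definition schema_wf :: "'r schema \<Rightarrow> bool" where
  "schema_wf sig \<longleftrightarrow> (\<forall>R. 1 \<le> keylen sig R \<and> keylen sig R \<le> arity sig R)"

definition key_equal :: "'r schema \<Rightarrow> ('r, 'c) fact \<Rightarrow> ('r, 'c) fact \<Rightarrow> bool" where
  "key_equal sig A B \<longleftrightarrow> fst A = fst B \<and>
     take (keylen sig (fst A)) (snd A) = take (keylen sig (fst B)) (snd B)"

definition block :: "'r schema \<Rightarrow> ('r, 'c) fact set \<Rightarrow> ('r, 'c) fact \<Rightarrow> ('r, 'c) fact set" where
  "block sig db A = {B \<in> db. key_equal sig A B}"

definition consistent :: "'r schema \<Rightarrow> ('r, 'c) fact set \<Rightarrow> bool" where
  "consistent sig S \<longleftrightarrow> (\<forall>A\<in>S. \<forall>B\<in>S. key_equal sig A B \<longrightarrow> A = B)"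

definition is_repair :: "'r schema \<Rightarrow> ('r, 'c) fact set \<Rightarrow> ('r, 'c) fact set \<Rightarrow> bool" where
  "is_repair sig S r \<longleftrightarrow> r \<subseteq> S \<and> consistent sig r \<and>
     (\<forall>r'. r \<subseteq> r' \<and> r' \<subseteq> S \<and> consistent sig r' \<longrightarrow> r' = r)"

definition sjf_query :: "'r schema \<Rightarrow> ('r, 'v, 'c) atom set \<Rightarrow> bool" where
  "sjf_query sig q \<longleftrightarrow> finite q \<and>
     (\<forall>a\<in>q. \<forall>b\<in>q. fst a = fst b \<longrightarrow> a = b) \<and>
     (\<forall>a\<in>q. length (snd a) = arity sig (fst a))"

definition is_database :: "'r schema \<Rightarrow> ('r, 'v, 'c) atom set \<Rightarrow> ('r, 'c) fact set \<Rightarrow> bool" where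
  "is_database sig q db \<longleftrightarrow> finite db \<and>
     (\<forall>A\<in>db. fst A \<in> fst ` q \<and> length (snd A) = arity sig (fst A)) \<and>
     (\<forall>A\<in>db. \<forall>B\<in>db. rmode sig (fst A) = ModeC \<and> key_equal sig A B \<longrightarrow> A = B)"

definition inst :: "('v \<Rightarrow> 'c) \<Rightarrow> ('r, 'v, 'c) atom \<Rightarrow> ('r, 'c) fact" where
  "inst \<theta> a = (fst a, map (\<lambda>t. case t of Var x \<Rightarrow> \<theta> x | Cst c \<Rightarrow> c) (snd a))"

definition atom_of :: "('r, 'v, 'c) atom set \<Rightarrow> ('r, 'c) fact \<Rightarrow> ('r, 'v, 'c) atom" where
  "atom_of q A = (THE a. a \<in> q \<and> fst a = fst A)"

definition garbage_set :: "'r schema \<Rightarrow> ('r, 'v, 'c) atom set \<Rightarrow> ('r, 'v, 'c) atom set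
    \<Rightarrow> ('r, 'c) fact set \<Rightarrow> ('r, 'c) fact set \<Rightarrow> bool" where
  "garbage_set sig q q0 db ob \<longleftrightarrow> ob \<subseteq> db \<and>
     (\<forall>A\<in>ob. atom_of q A \<in> q0 \<and> block sig db A \<subseteq> ob) \<and>
     (\<exists>r. is_repair sig ob r \<and>
        (\<forall>\<theta>. inst \<theta> ` q \<subseteq> (db - ob) \<union> r \<longrightarrow> inst \<theta> ` q0 \<inter> r = {}))"

end

theory Submission
  imports Defs
begin

(* Since o is closed under the blocks of db, no fact of o is key-equal to a fact of p, so
   repairs r of o and s of p glue to a repair r \<union> s of o \<union> p.  Take a valuation \<theta> with
   \<theta>(q) \<subseteq> (db - (o \<union> p)) \<union> r \<union> s.  Then \<theta>(q) \<subseteq> (db - o) \<union> r, so \<theta>(q0) misses r; as every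
   fact of r has its atom in q0 and q is self-join-free, \<theta>(q) misses r altogether.  Hence
   \<theta>(q) \<subseteq> ((db - o) - p) \<union> s, and \<theta>(q0) misses s as well. *)

lemma key_equal_sym: "key_equal sig A B \<Longrightarrow> key_equal sig B A"
  unfolding key_equal_def by auto

lemma consistent_subset: "consistent sig S \<Longrightarrow> T \<subseteq> S \<Longrightarrow> consistent sig T"
  unfolding consistent_def by blast

lemma consistent_Un:
  assumes "consistent sig S" "consistent sig T"
    and "\<And>A B. A \<in> S \<Longrightarrow> B \<in> T \<Longrightarrow> \<not> key_equal sig A B"
  shows "consistent sig (S \<union> T)"
  unfolding consistent_def
proof (intro ballI impI)
  fix A B assume "A \<in> S \<union> T" "B \<in> S \<union> T" and AB: "key_equal sig A B"
  moreover note key_equal_sym[OF AB]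
  ultimately show "A = B" using assms unfolding consistent_def by blast
qed

lemma is_repair_Un:
  assumes r: "is_repair sig S r" and s: "is_repair sig T s"
    and apart: "\<And>A B. A \<in> S \<Longrightarrow> B \<in> T \<Longrightarrow> \<not> key_equal sig A B"
  shows "is_repair sig (S \<union> T) (r \<union> s)"
proof -
  have r_sub: "r \<subseteq> S" and r_cons: "consistent sig r"
    and r_max: "\<And>r'. r \<subseteq> r' \<Longrightarrow> r' \<subseteq> S \<Longrightarrow> consistent sig r' \<Longrightarrow> r' = r"
    using r unfolding is_repair_def by auto
  have s_sub: "s \<subseteq> T" and s_cons: "consistent sig s"
    and s_max: "\<And>s'. s \<subseteq> s' \<Longrightarrow> s' \<subseteq> T \<Longrightarrow> consistent sig s' \<Longrightarrow> s' = s"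
    using s unfolding is_repair_def by auto
  have "consistent sig (r \<union> s)"
    using r_cons s_cons by (rule consistent_Un) (use r_sub s_sub apart in blast)
  moreover have "r' = r \<union> s"
    if "r \<union> s \<subseteq> r'" "r' \<subseteq> S \<union> T" "consistent sig r'" for r'
  proof -
    have "r' \<inter> S = r"
      using that r_sub by (intro r_max) (auto intro: consistent_subset)
    moreover have "r' \<inter> T = s"
      using that s_sub by (intro s_max) (auto intro: consistent_subset)
    ultimately show ?thesis using that(2) by blast
  qed
  ultimately show ?thesis
    unfolding is_repair_def using r_sub s_sub by blast
qed

lemma atom_of_inst:
  assumes "sjf_query sig q" "a \<in> q"
  shows "atom_of q (inst \<theta> a) = a"
  unfolding atom_of_def
proof (rule the_equality)
  show "a \<in> q \<and> fst a = fst (inst \<theta> a)" using assms(2) by (simp add: inst_def)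
next
  fix b assume "b \<in> q \<and> fst b = fst (inst \<theta> a)"
  then show "b = a" using assms unfolding sjf_query_def inst_def by auto
qed

lemma inst_disjoint_if_subquery_disjoint:
  assumes "sjf_query sig q"
    and "\<And>A. A \<in> r \<Longrightarrow> atom_of q A \<in> q0"
    and "inst \<theta> ` q0 \<inter> r = {}"
  shows "inst \<theta> ` q \<inter> r = {}"
  using assms atom_of_inst[OF assms(1)] by fastforce

lemma garbage_set_subset: "garbage_set sig q q0 db ob \<Longrightarrow> ob \<subseteq> db"
  by (simp add: garbage_set_def)

lemma garbage_set_atom_of: "garbage_set sig q q0 db ob \<Longrightarrow> A \<in> ob \<Longrightarrow> atom_of q A \<in> q0"
  by (simp add: garbage_set_def)

lemma garbage_set_block: "garbage_set sig q q0 db ob \<Longrightarrow> A \<in> ob \<Longrightarrow> block sig db A \<subseteq> ob"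
  by (simp add: garbage_set_def)

lemma garbage_set_repairE:
  assumes "garbage_set sig q q0 db ob"
  obtains r where "is_repair sig ob r"
    and "\<And>\<theta>. inst \<theta> ` q \<subseteq> (db - ob) \<union> r \<Longrightarrow> inst \<theta> ` q0 \<inter> r = {}"
proof -
  from assms obtain r where "is_repair sig ob r"
    and "\<forall>\<theta>. inst \<theta> ` q \<subseteq> (db - ob) \<union> r \<longrightarrow> inst \<theta> ` q0 \<inter> r = {}"
    unfolding garbage_set_def by blast
  then show thesis using that by blast
qed

lemma garbage_setI:
  assumes "ob \<subseteq> db" "\<And>A. A \<in> ob \<Longrightarrow> atom_of q A \<in> q0"
    and "\<And>A. A \<in> ob \<Longrightarrow> block sig db A \<subseteq> ob" "is_repair sig ob r"
    and "\<And>\<theta>. inst \<theta> ` q \<subseteq> (db - ob) \<union> r \<Longrightarrow> inst \<theta> ` q0 \<inter> r = {}"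
  shows "garbage_set sig q q0 db ob"
  unfolding garbage_set_def
proof (intro conjI ballI exI[of _ r] allI impI)
qed (use assms in auto)

lemma garbage_set_not_key_equal_outside:
  assumes "garbage_set sig q q0 db ob" "A \<in> ob" "B \<in> db - ob"
  shows "\<not> key_equal sig A B"
  using garbage_set_block[OF assms(1,2)] assms(3) unfolding block_def by blast

lemma garbage_set_block_Un:
  assumes o: "garbage_set sig q q0 db ob" and p: "garbage_set sig q q0 (db - ob) p"
    and A: "A \<in> ob \<union> p"
  shows "block sig db A \<subseteq> ob \<union> p"
proof
  fix B assume B: "B \<in> block sig db A"
  then have "B \<in> db" and AB: "key_equal sig A B" unfolding block_def by auto
  from A show "B \<in> ob \<union> p"
  proof
    assume "A \<in> ob"
    with B garbage_set_block[OF o] show ?thesis by blast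
  next
    assume "A \<in> p"
    with garbage_set_subset[OF p] have "A \<in> db - ob" by blast
    then have "B \<notin> ob"
      using garbage_set_not_key_equal_outside[OF o] key_equal_sym[OF AB] by blast
    with \<open>B \<in> db\<close> AB garbage_set_block[OF p \<open>A \<in> p\<close>] show ?thesis
      unfolding block_def by blast
  qed
qed

lemma inst_disjoint_garbage_repair_Un:
  assumes "sjf_query sig q"
    and "\<And>A. A \<in> r \<Longrightarrow> atom_of q A \<in> q0" "s \<subseteq> p" "p \<subseteq> db - ob"
    and r_garbage: "\<And>\<theta>. inst \<theta> ` q \<subseteq> (db - ob) \<union> r \<Longrightarrow> inst \<theta> ` q0 \<inter> r = {}"
    and s_garbage: "\<And>\<theta>. inst \<theta> ` q \<subseteq> ((db - ob) - p) \<union> s \<Longrightarrow> inst \<theta> ` q0 \<inter> s = {}"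
    and \<theta>: "inst \<theta> ` q \<subseteq> (db - (ob \<union> p)) \<union> (r \<union> s)"
  shows "inst \<theta> ` q0 \<inter> (r \<union> s) = {}"
proof -
  have "inst \<theta> ` q \<subseteq> (db - ob) \<union> r" using \<theta> assms(3,4) by blast
  then have q0_r: "inst \<theta> ` q0 \<inter> r = {}" by (rule r_garbage)
  with assms(1,2) have "inst \<theta> ` q \<inter> r = {}"
    by (rule inst_disjoint_if_subquery_disjoint)
  then have "inst \<theta> ` q \<subseteq> ((db - ob) - p) \<union> s" using \<theta> by blast
  then have "inst \<theta> ` q0 \<inter> s = {}" by (rule s_garbage)
  with q0_r show ?thesis by blast
qed

theorem lemma32:
  fixes sig :: "'r schema"
    and q q0 :: "('r, 'v, 'c) atom set"
    and db ob p :: "('r, 'c) fact set"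
  assumes "schema_wf sig"
    and "sjf_query sig q"
    and "q0 \<subseteq> q"
    and "is_database sig q db"
    and "garbage_set sig q q0 db ob"
    and "garbage_set sig q q0 (db - ob) p"
  shows "garbage_set sig q q0 db (ob \<union> p)"
proof -
  obtain r where r: "is_repair sig ob r"
    and r_garbage: "\<And>\<theta>. inst \<theta> ` q \<subseteq> (db - ob) \<union> r \<Longrightarrow> inst \<theta> ` q0 \<inter> r = {}"
    using assms(5) by (rule garbage_set_repairE) blast
  obtain s where s: "is_repair sig p s"
    and s_garbage: "\<And>\<theta>. inst \<theta> ` q \<subseteq> ((db - ob) - p) \<union> s \<Longrightarrow> inst \<theta> ` q0 \<inter> s = {}"
    using assms(6) by (rule garbage_set_repairE) blast
  have "r \<subseteq> ob" "s \<subseteq> p" using r s unfolding is_repair_def by auto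
  have p_outside: "p \<subseteq> db - ob" using assms(6) by (rule garbage_set_subset)
  show ?thesis
  proof (rule garbage_setI)
    show "ob \<union> p \<subseteq> db" using garbage_set_subset[OF assms(5)] p_outside by blast
    show "atom_of q A \<in> q0" if "A \<in> ob \<union> p" for A
      using that garbage_set_atom_of[OF assms(5)] garbage_set_atom_of[OF assms(6)] by blast
    show "block sig db A \<subseteq> ob \<union> p" if "A \<in> ob \<union> p" for A
      using assms(5,6) that by (rule garbage_set_block_Un)
    show "is_repair sig (ob \<union> p) (r \<union> s)"
      using r s by (rule is_repair_Un)
        (use p_outside garbage_set_not_key_equal_outside[OF assms(5)] in blast)
    show "inst \<theta> ` q0 \<inter> (r \<union> s) = {}"
      if "inst \<theta> ` q \<subseteq> (db - (ob \<union> p)) \<union> (r \<union> s)" for \<theta>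
      using assms(2) _ \<open>s \<subseteq> p\<close> p_outside r_garbage s_garbage that
      by (rule inst_disjoint_garbage_repair_Un)
        (use \<open>r \<subseteq> ob\<close> garbage_set_atom_of[OF assms(5)] in blast)
  qed
qed

end
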